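(* A function $h\in\mathbf{F}(\mathbb{S}^1)$ is an extreme point of $\mathbf{F}(\mathbb{S}^1)$ if and only if $|h'|=1$ almost everywhere on $[0,\pi]$.
   Context: $\mathbf{F}(\mathbb{S}^1)=\{f:[0,\pi]\to\mathbb{R}\ 1\text{-Lipschitz}:0\le f\le\pi,\ f(0)+f(\pi)=\pi\}$, a convex subset of $C([0,\pi])$. A point of a convex set $S$ is an extreme point if it is not the midpoint of any pair of distinct points of $S$. Elements of $\mathbf{F}(\mathbb{S}^1)$ are differentiable almost everywhere (Rademacher). *)

theory Defs
  imports "HOL-Analysis.Analysis"
begin

text \<open>Elements of C([0,pi]) are represented by the canonical representative
  that vanishes outside [0,pi], so that equality of functions is equality in C([0,pi]).\<close>
definition F_S1 :: "(real \<Rightarrow> real) set" where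
  "F_S1 = {f. (\<forall>x. x \<notin> {0..pi} \<longrightarrow> f x = 0) \<and>
              1-lipschitz_on {0..pi} f \<and>
              (\<forall>x\<in>{0..pi}. 0 \<le> f x \<and> f x \<le> pi) \<and>
              f 0 + f pi = pi}"

definition extreme_pt :: "(real \<Rightarrow> real) set \<Rightarrow> (real \<Rightarrow> real) \<Rightarrow> bool" where
  "extreme_pt S h \<longleftrightarrow> h \<in> S \<and>
     \<not> (\<exists>f\<in>S. \<exists>g\<in>S. f \<noteq> g \<and> h = (\<lambda>x. (f x + g x) / 2))"

end

(*
  For h in F(S^1), the defect of h at x is the infimum, over subdivisions
  0 = x_0 <= ... <= x_n = x, of the sum of the slacks (x_(i+1) - x_i) - |h x_(i+1) - h x_i|;
  it plays the role of the integral of 1 - |h'| over [0, x].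

  If the defect M at pi is positive, h stays away from 0 and pi, and a small multiple of
  defect h - M/2 moves by less than the slack of h, so it can be added to and subtracted
  from h inside F(S^1): h is not extreme.

  If the defect at pi is 0, pick subdivisions of slack below 2^-n.  Almost every point
  lies in infinitely many segments on which h descends, or in infinitely many on which it
  ascends.  On a descent t + h t is monotone and grows only by the slack, so by
  Borel-Cantelli it maps the limsup of the descents to a null set; a Vitali covering
  argument then shows (t + h t)' = 0, i.e. h' = -1, almost everywhere there.
  Symmetrically h' = 1 almost everywhere on the ascents.

  Conversely, if |h'| = 1 almost everywhere and h = (f + g)/2 with f, g in F(S^1), then
  f' = g' = h' wherever h' = +-1, because f and g are 1-Lipschitz.  So f - g is Lipschitz
  with derivative 0 almost everywhere, hence constant, and f 0 + f pi = g 0 + g pi = pi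
  forces f = g.
*)
theory Submission
  imports Defs
begin

section \<open>Slack and defect\<close>

lemma sorted_hd_last_bounds:
  fixes xs :: "'a::linorder list"
  shows "sorted xs \<Longrightarrow> t \<in> set xs \<Longrightarrow> hd xs \<le> t \<and> t \<le> last xs"
proof (induction xs)
  case (Cons x xs)
  then show ?case by (cases "xs = []") auto
qed simp

definition slack :: "(real \<Rightarrow> real) \<Rightarrow> real \<Rightarrow> real \<Rightarrow> real" where
  "slack h x y = (y - x) - \<bar>h y - h x\<bar>"

fun chain_slack :: "(real \<Rightarrow> real) \<Rightarrow> real list \<Rightarrow> real" where
  "chain_slack h (x # y # zs) = slack h x y + chain_slack h (y # zs)"
| "chain_slack h _ = 0"

definition subdivisions :: "real \<Rightarrow> real list set" where
  "subdivisions x = {xs. xs \<noteq> [] \<and> sorted xs \<and> hd xs = 0 \<and> last xs = x}"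

definition defect :: "(real \<Rightarrow> real) \<Rightarrow> real \<Rightarrow> real" where
  "defect h x = Inf (chain_slack h ` subdivisions x)"

lemma slack_nonneg:
  assumes "1-lipschitz_on S h" "x \<in> S" "y \<in> S" "x \<le> y"
  shows "0 \<le> slack h x y"
  using lipschitz_onD[OF assms(1) assms(3) assms(2)] assms(4)
  by (simp add: slack_def dist_real_def)

lemma slack_superadditive: "slack h x y + slack h y z \<le> slack h x z"
  using abs_triangle_ineq[of "h z - h y" "h y - h x"] by (simp add: slack_def)

lemma slack_uminus [simp]: "slack (\<lambda>t. - h t) = slack h"
  by (simp add: slack_def fun_eq_iff abs_minus_commute)

lemma chain_slack_uminus [simp]: "chain_slack (\<lambda>t. - h t) xs = chain_slack h xs"
  by (induction h xs rule: chain_slack.induct) simp_all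

lemma chain_slack_nonneg:
  assumes "1-lipschitz_on S h" "sorted xs" "set xs \<subseteq> S"
  shows "0 \<le> chain_slack h xs"
  using assms(2,3)
proof (induction xs rule: induct_list012)
  case (3 x y zs)
  then show ?case using slack_nonneg[OF assms(1), of x y] by simp
qed simp_all

lemma chain_slack_snoc: "xs \<noteq> [] \<Longrightarrow> chain_slack h (xs @ [y]) = chain_slack h xs + slack h (last xs) y"
  by (induction xs rule: induct_list012) auto

text \<open>Cutting a chain at a point x: the slack of the part beyond x is nonnegative, and
  replacing the segment across x by the segment ending at x can only lower the slack.\<close>
lemma chain_slack_takeWhile_le:
  assumes lip: "1-lipschitz_on S h"
  shows "sorted (u # ys) \<Longrightarrow> set (u # ys) \<subseteq> S \<Longrightarrow> x \<in> S \<Longrightarrow> u \<le> x \<Longrightarrow> x \<le> last (u # ys) \<Longrightarrow>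
    chain_slack h (takeWhile (\<lambda>t. t < x) (u # ys) @ [x]) \<le> chain_slack h (u # ys)"
proof (induction ys arbitrary: u)
  case Nil
  then show ?case by (cases "u < x") auto
next
  case (Cons v zs)
  have tail_nonneg: "0 \<le> chain_slack h (v # zs)"
    using chain_slack_nonneg[OF lip] Cons.prems(1,2) by auto
  consider "x \<le> u" | "u < x" "v < x" | "u < x" "x \<le> v" by linarith
  then show ?case
  proof cases
    case 1
    then have "u = x" using Cons.prems(4) by linarith
    then show ?thesis using slack_nonneg[OF lip, of u v] Cons.prems(1,2) tail_nonneg by simp
  next
    case 2
    then show ?thesis using Cons.IH[of v] Cons.prems by simp
  next
    case 3
    have "slack h u x \<le> slack h u x + slack h x v"
      using slack_nonneg[OF lip, of x v] Cons.prems(2,3) 3 by simp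
    also have "\<dots> \<le> slack h u v" by (rule slack_superadditive)
    finally show ?thesis using 3 tail_nonneg by simp
  qed
qed

lemma subdivisions_subset:
  assumes "xs \<in> subdivisions x"
  shows "set xs \<subseteq> {0..x}"
proof
  fix t assume t: "t \<in> set xs"
  have "hd xs \<le> t \<and> t \<le> last xs"
    using assms t sorted_hd_last_bounds[of xs t] by (simp add: subdivisions_def)
  then show "t \<in> {0..x}" using assms by (simp add: subdivisions_def)
qed

lemma chain_slack_subdivisions_nonneg:
  "1-lipschitz_on {0..x} h \<Longrightarrow> xs \<in> subdivisions x \<Longrightarrow> 0 \<le> chain_slack h xs"
  using subdivisions_subset chain_slack_nonneg by (fastforce simp: subdivisions_def)

lemma bdd_below_chain_slack:
  "1-lipschitz_on {0..x} h \<Longrightarrow> bdd_below (chain_slack h ` subdivisions x)"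
  using chain_slack_subdivisions_nonneg by (intro bdd_belowI2[where m = 0]) auto

lemma defect_le:
  "1-lipschitz_on {0..x} h \<Longrightarrow> xs \<in> subdivisions x \<Longrightarrow> defect h x \<le> chain_slack h xs"
  unfolding defect_def by (rule cInf_lower) (auto intro: bdd_below_chain_slack)

lemma subdivisions_nonempty: "0 \<le> x \<Longrightarrow> [0, x] \<in> subdivisions x"
  by (simp add: subdivisions_def)

lemma defect_nonneg:
  assumes "1-lipschitz_on {0..x} h" "0 \<le> x"
  shows "0 \<le> defect h x"
proof -
  have "[0, x] \<in> subdivisions x" by (rule subdivisions_nonempty[OF assms(2)])
  then show ?thesis unfolding defect_def
    using chain_slack_subdivisions_nonneg[OF assms(1)] by (intro cInf_greatest) auto
qed

lemma defect_0 [simp]: "defect h 0 = 0"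
proof -
  have "[0] \<in> subdivisions 0" by (simp add: subdivisions_def)
  then have "defect h 0 \<le> 0" using defect_le[of 0 h "[0]"] by (simp add: lipschitz_on_def)
  then show ?thesis using defect_nonneg[of 0 h] by (simp add: lipschitz_on_def)
qed

lemma defect_le_add_slack:
  assumes lip: "1-lipschitz_on {0..y} h" and "0 \<le> x" "x \<le> y"
  shows "defect h y \<le> defect h x + slack h x y"
proof -
  have "defect h y - slack h x y \<le> defect h x"
    unfolding defect_def[of h x]
  proof (rule cInf_greatest)
    show "chain_slack h ` subdivisions x \<noteq> {}" using subdivisions_nonempty assms(2) by blast
  next
    fix r assume "r \<in> chain_slack h ` subdivisions x"
    then obtain xs where xs: "xs \<in> subdivisions x" "r = chain_slack h xs" by auto
    have "xs @ [y] \<in> subdivisions y"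
      using xs(1) subdivisions_subset[OF xs(1)] assms(3) by (auto simp: subdivisions_def sorted_append)
    then have "defect h y \<le> chain_slack h (xs @ [y])" by (rule defect_le[OF lip])
    also have "\<dots> = chain_slack h xs + slack h x y"
      using xs(1) by (simp add: chain_slack_snoc subdivisions_def)
    finally show "defect h y - slack h x y \<le> r" using xs(2) by simp
  qed
  then show ?thesis by simp
qed

lemma defect_mono:
  assumes lip: "1-lipschitz_on {0..y} h" and "0 \<le> x" "x \<le> y"
  shows "defect h x \<le> defect h y"
  unfolding defect_def[of h y]
proof (rule cInf_greatest)
  show "chain_slack h ` subdivisions y \<noteq> {}" using subdivisions_nonempty[of y] assms by auto
next
  fix r assume "r \<in> chain_slack h ` subdivisions y"
  then obtain ys where ys: "ys \<in> subdivisions y" "r = chain_slack h ys" by auto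
  then obtain zs where zs: "ys = 0 # zs" by (cases ys) (auto simp: subdivisions_def)
  let ?t = "takeWhile (\<lambda>t. t < x) ys @ [x]"
  have "hd ?t = 0" using zs assms(2) by (cases "0 < x") auto
  moreover have "sorted ?t"
    using ys(1) by (auto simp: subdivisions_def sorted_append dest: set_takeWhileD)
  ultimately have "?t \<in> subdivisions x" by (simp add: subdivisions_def)
  then have "defect h x \<le> chain_slack h ?t"
    using lipschitz_on_subset[OF lip] assms(3) by (intro defect_le) auto
  also have "\<dots> \<le> chain_slack h ys"
    using chain_slack_takeWhile_le[OF lip, of 0 zs x] ys(1) subdivisions_subset[OF ys(1)] assms
    by (simp add: zs subdivisions_def)
  finally show "defect h x \<le> r" using ys(2) by simp
qed

section \<open>Positive defect rules out extremality\<close>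

lemma F_S1D:
  assumes "h \<in> F_S1"
  shows "1-lipschitz_on {0..pi} h" "\<And>x. x \<notin> {0..pi} \<Longrightarrow> h x = 0"
    "\<And>x. x \<in> {0..pi} \<Longrightarrow> 0 \<le> h x \<and> h x \<le> pi" "h 0 + h pi = pi"
  using assms by (auto simp: F_S1_def)

lemma not_extreme_pt_if_perturbation:
  assumes "(\<lambda>x. h x + \<phi> x) \<in> S" "(\<lambda>x. h x - \<phi> x) \<in> S" "\<phi> \<noteq> (\<lambda>x. 0)"
  shows "\<not> extreme_pt S h"
proof -
  have "(\<lambda>x. h x + \<phi> x) \<noteq> (\<lambda>x. h x - \<phi> x)"
    using assms(3) by (auto simp: fun_eq_iff)
  moreover have "h = (\<lambda>x. ((h x + \<phi> x) + (h x - \<phi> x)) / 2)" by simp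
  ultimately show ?thesis using assms(1,2) unfolding extreme_pt_def by blast
qed

lemma lipschitz_on_add_slack_bounded:
  assumes "\<And>x y. x \<in> S \<Longrightarrow> y \<in> S \<Longrightarrow> x \<le> y \<Longrightarrow> \<bar>\<phi> y - \<phi> x\<bar> \<le> slack h x y"
  shows "1-lipschitz_on S (\<lambda>x. h x + \<phi> x)"
proof (rule lipschitz_onI)
  have *: "\<bar>(h y + \<phi> y) - (h x + \<phi> x)\<bar> \<le> y - x" if "x \<in> S" "y \<in> S" "x \<le> y" for x y
    using assms[OF that] abs_triangle_ineq[of "h y - h x" "\<phi> y - \<phi> x"] by (simp add: slack_def)
  fix x y assume "x \<in> S" "y \<in> S"
  then show "dist (h x + \<phi> x) (h y + \<phi> y) \<le> 1 * dist x y"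
    using *[of x y] *[of y x] by (cases "x \<le> y") (simp_all add: dist_real_def abs_minus_commute)
qed simp

lemma F_S1_add_perturbation:
  assumes h: "h \<in> F_S1"
    and outside: "\<And>x. x \<notin> {0..pi} \<Longrightarrow> \<phi> x = 0"
    and ends: "\<phi> 0 + \<phi> pi = 0"
    and small: "\<And>x. x \<in> {0..pi} \<Longrightarrow> \<bar>\<phi> x\<bar> \<le> min (h x) (pi - h x)"
    and slack: "\<And>x y. x \<in> {0..pi} \<Longrightarrow> y \<in> {0..pi} \<Longrightarrow> x \<le> y \<Longrightarrow> \<bar>\<phi> y - \<phi> x\<bar> \<le> slack h x y"
  shows "(\<lambda>x. h x + \<phi> x) \<in> F_S1"
proof -
  have "0 \<le> h x + \<phi> x \<and> h x + \<phi> x \<le> pi" if "x \<in> {0..pi}" for x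
    using small[OF that] by (simp add: abs_le_iff)
  then show ?thesis
    using F_S1D(2,4)[OF h] outside ends lipschitz_on_add_slack_bounded[of "{0..pi}", OF slack]
    by (simp add: F_S1_def algebra_simps)
qed

lemma defect_pos_imp_values_interior:
  assumes h: "h \<in> F_S1" and pos: "defect h pi > 0" and x: "x \<in> {0..pi}"
  shows "0 < h x \<and> h x < pi"
proof (rule ccontr)
  assume "\<not> (0 < h x \<and> h x < pi)"
  then have hx: "h x = 0 \<or> h x = pi" using F_S1D(3)[OF h x] by auto
  have "[0, x, pi] \<in> subdivisions pi" using x by (auto simp: subdivisions_def)
  then have "defect h pi \<le> chain_slack h [0, x, pi]" by (rule defect_le[OF F_S1D(1)[OF h]])
  also have "chain_slack h [0, x, pi] = 0"
  proof -
    have "0 \<le> h 0" "h 0 \<le> pi" "0 \<le> h pi" "h pi \<le> pi" "h 0 + h pi = pi"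
      using F_S1D(3)[OF h, of 0] F_S1D(3)[OF h, of pi] F_S1D(4)[OF h] by auto
    then show ?thesis using hx by (elim disjE) (simp_all add: slack_def)
  qed
  finally show False using pos by simp
qed

lemma defect_pos_imp_values_bounded_away:
  assumes h: "h \<in> F_S1" and pos: "defect h pi > 0"
  obtains \<delta> where "0 < \<delta>" "\<And>x. x \<in> {0..pi} \<Longrightarrow> \<delta> \<le> min (h x) (pi - h x)"
proof -
  have "continuous_on {0..pi} (\<lambda>x. min (h x) (pi - h x))"
    using lipschitz_on_continuous_on[OF F_S1D(1)[OF h]] by (intro continuous_intros)
  moreover have "{0..pi} \<noteq> ({} :: real set)" by simp
  ultimately obtain x0 where "x0 \<in> {0..pi}" "\<forall>x\<in>{0..pi}. min (h x0) (pi - h x0) \<le> min (h x) (pi - h x)"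
    using continuous_attains_inf[OF compact_Icc] by blast
  moreover have "0 < min (h x0) (pi - h x0)"
    using defect_pos_imp_values_interior[OF h pos \<open>x0 \<in> {0..pi}\<close>] by simp
  ultimately show ?thesis using that by blast
qed

lemma scaled_defect_bounds:
  assumes lip: "1-lipschitz_on {0..b} h" and \<epsilon>: "0 \<le> \<epsilon>" "\<epsilon> \<le> 1"
    and \<phi>: "\<And>x. \<phi> x = \<epsilon> * (defect h x - defect h b / 2)"
  shows "\<And>x. x \<in> {0..b} \<Longrightarrow> \<bar>\<phi> x\<bar> \<le> \<epsilon> * (defect h b / 2)"
    and "\<And>x y. x \<in> {0..b} \<Longrightarrow> y \<in> {0..b} \<Longrightarrow> x \<le> y \<Longrightarrow> \<bar>\<phi> y - \<phi> x\<bar> \<le> slack h x y"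
proof -
  have mono: "defect h x \<le> defect h y" if "x \<in> {0..b}" "y \<in> {0..b}" "x \<le> y" for x y
    using defect_mono[OF lipschitz_on_subset[OF lip]] that by simp
  show "\<bar>\<phi> x\<bar> \<le> \<epsilon> * (defect h b / 2)" if x: "x \<in> {0..b}" for x
  proof -
    have "0 \<le> defect h x" "defect h x \<le> defect h b"
      using defect_nonneg[OF lipschitz_on_subset[OF lip]] mono[of x b] x by auto
    then have "\<bar>defect h x - defect h b / 2\<bar> \<le> defect h b / 2" by linarith
    then have "\<epsilon> * \<bar>defect h x - defect h b / 2\<bar> \<le> \<epsilon> * (defect h b / 2)"
      by (rule mult_left_mono) (rule \<epsilon>(1))
    then show ?thesis using \<epsilon>(1) by (simp add: \<phi> abs_mult)
  qed
  show "\<bar>\<phi> y - \<phi> x\<bar> \<le> slack h x y" if xy: "x \<in> {0..b}" "y \<in> {0..b}" "x \<le> y" for x y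
  proof -
    have "\<bar>\<phi> y - \<phi> x\<bar> = \<epsilon> * (defect h y - defect h x)"
      using \<epsilon>(1) mono[OF xy] by (simp add: \<phi> abs_mult flip: right_diff_distrib)
    also have "\<dots> \<le> defect h y - defect h x"
      using \<epsilon> mono[OF xy] by (intro mult_left_le_one_le) simp_all
    also have "\<dots> \<le> slack h x y"
      using defect_le_add_slack[OF lipschitz_on_subset[OF lip], of y x] xy by simp
    finally show ?thesis .
  qed
qed

text \<open>The perturbation is a multiple of \<open>defect h - defect h pi / 2\<close>, which takes opposite
  values at 0 and pi.\<close>
theorem not_extreme_if_defect_pos:
  assumes h: "h \<in> F_S1" and pos: "defect h pi > 0"
  shows "\<not> extreme_pt F_S1 h"
proof -
  define M where "M = defect h pi"
  obtain \<delta> where \<delta>: "0 < \<delta>" "\<And>x. x \<in> {0..pi} \<Longrightarrow> \<delta> \<le> min (h x) (pi - h x)"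
    using defect_pos_imp_values_bounded_away[OF h pos] by blast
  define \<epsilon> where "\<epsilon> = min 1 (2 * \<delta> / M)"
  have \<epsilon>: "0 < \<epsilon>" "\<epsilon> \<le> 1" "\<epsilon> * (M / 2) \<le> \<delta>"
  proof -
    show "0 < \<epsilon>" "\<epsilon> \<le> 1" using \<delta>(1) pos by (simp_all add: \<epsilon>_def M_def)
    have "\<epsilon> * (M / 2) \<le> (2 * \<delta> / M) * (M / 2)"
      using pos by (intro mult_right_mono) (simp_all add: \<epsilon>_def M_def)
    then show "\<epsilon> * (M / 2) \<le> \<delta>" using pos by (simp add: M_def)
  qed
  define \<phi> where "\<phi> x = (if x \<in> {0..pi} then \<epsilon> * (defect h x - M / 2) else 0)" for x
  note bounds = scaled_defect_bounds[OF F_S1D(1)[OF h] less_imp_le[OF \<epsilon>(1)] \<epsilon>(2), of "\<lambda>x. \<epsilon> * (defect h x - M / 2)"]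
  have perturbed: "(\<lambda>x. h x + s * \<phi> x) \<in> F_S1" if s: "\<bar>s\<bar> = 1" for s
  proof (rule F_S1_add_perturbation[OF h])
    show "s * \<phi> x = 0" if "x \<notin> {0..pi}" for x using that by (auto simp: \<phi>_def)
    show "s * \<phi> 0 + s * \<phi> pi = 0" by (simp add: \<phi>_def M_def algebra_simps)
    show "\<bar>s * \<phi> x\<bar> \<le> min (h x) (pi - h x)" if "x \<in> {0..pi}" for x
      using bounds(1)[OF _ that] \<epsilon>(3) \<delta>(2)[OF that] s that by (simp add: \<phi>_def M_def abs_mult)
    show "\<bar>s * \<phi> y - s * \<phi> x\<bar> \<le> slack h x y" if "x \<in> {0..pi}" "y \<in> {0..pi}" "x \<le> y" for x y
      using bounds(2)[OF _ that] s that by (simp add: \<phi>_def M_def abs_mult flip: right_diff_distrib)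
  qed
  have "\<phi> 0 \<noteq> 0" using \<epsilon>(1) pos by (simp add: \<phi>_def M_def)
  then show ?thesis
    using perturbed[of 1] perturbed[of "-1"] by (intro not_extreme_pt_if_perturbation) auto
qed

section \<open>Unit derivative almost everywhere implies extremality\<close>

lemma abs_diff_unit_le_abs_sum:
  fixes a b D :: real
  assumes "\<bar>D\<bar> = 1" "\<bar>a\<bar> \<le> 1" "\<bar>b\<bar> \<le> 1"
  shows "\<bar>a - D\<bar> \<le> \<bar>a + b - 2 * D\<bar>"
proof -
  have ab: "a \<le> 1" "-1 \<le> a" "b \<le> 1" "-1 \<le> b" using assms(2,3) by (simp_all add: abs_le_iff)
  consider "D = 1" | "D = -1" using assms(1) by (auto simp: abs_if split: if_splits)
  then show ?thesis
  proof cases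
    case 1
    then have "\<bar>a - D\<bar> = 1 - a" "\<bar>a + b - 2 * D\<bar> = 2 - a - b"
      using ab abs_of_nonpos[of "a - 1"] abs_of_nonpos[of "a + b - 2"] by simp_all
    then show ?thesis using ab by simp
  next
    case 2
    then have "\<bar>a - D\<bar> = a + 1" "\<bar>a + b - 2 * D\<bar> = a + b + 2"
      using ab abs_of_nonneg[of "a + 1"] abs_of_nonneg[of "a + b + 2"] by simp_all
    then show ?thesis using ab by simp
  qed
qed

lemma has_real_derivative_of_midpoint:
  assumes f: "1-lipschitz_on S f" and g: "1-lipschitz_on S g" and x: "x \<in> interior S"
    and h: "((\<lambda>y. (f y + g y) / 2) has_real_derivative D) (at x)" and D: "\<bar>D\<bar> = 1"
  shows "(f has_real_derivative D) (at x)"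
proof -
  define Q where "Q k y = (k y - k x) / (y - x)" for k :: "real \<Rightarrow> real" and y
  have "(Q (\<lambda>y. (f y + g y) / 2) \<longlongrightarrow> D) (at x)"
    using h unfolding Q_def by (simp add: has_field_derivative_iff)
  then have "((\<lambda>y. 2 * \<bar>Q (\<lambda>y. (f y + g y) / 2) y - D\<bar>) \<longlongrightarrow> 0) (at x)"
    by (intro tendsto_mult_right_zero tendsto_rabs_zero) (simp add: LIM_zero)
  moreover have "\<forall>\<^sub>F y in at x. norm (Q f y - D) \<le> 2 * \<bar>Q (\<lambda>y. (f y + g y) / 2) y - D\<bar>"
    using eventually_at_in_open[OF open_interior x]
  proof eventually_elim
    case (elim y)
    then have y: "y \<in> S" "y \<noteq> x" using interior_subset by auto
    have "\<bar>Q k y\<bar> \<le> 1" if "1-lipschitz_on S k" for k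
      using lipschitz_onD[OF that y(1) interior_subset[THEN subsetD, OF x]] y(2)
      by (simp add: Q_def dist_real_def abs_divide divide_le_eq_1)
    moreover have mid: "Q (\<lambda>y. (f y + g y) / 2) y = (Q f y + Q g y) / 2"
      by (simp add: Q_def add_divide_distrib diff_divide_distrib mult.commute)
    ultimately have "\<bar>Q f y - D\<bar> \<le> \<bar>Q f y + Q g y - 2 * D\<bar>"
      using abs_diff_unit_le_abs_sum[OF D] f g by blast
    also have "Q f y + Q g y - 2 * D = 2 * (Q (\<lambda>y. (f y + g y) / 2) y - D)"
      using mid by simp
    finally show ?case by (simp only: real_norm_def abs_mult abs_numeral)
  qed
  ultimately have "((\<lambda>y. Q f y - D) \<longlongrightarrow> 0) (at x)"
    by (rule Lim_null_comparison[rotated])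
  then show ?thesis by (simp add: has_field_derivative_iff Q_def LIM_zero_iff)
qed

lemma has_real_derivative_zero_iff_eventually_le:
  "(F has_real_derivative 0) (at x) \<longleftrightarrow> (\<forall>e>0. \<forall>\<^sub>F y in at x. \<bar>F y - F x\<bar> \<le> e * \<bar>y - x\<bar>)"
proof -
  have quotient: "\<bar>(F y - F x) / (y - x)\<bar> \<le> e \<longleftrightarrow> \<bar>F y - F x\<bar> \<le> e * \<bar>y - x\<bar>" if "y \<noteq> x" for y e
    using that by (simp add: abs_divide pos_divide_le_eq)
  have "(F has_real_derivative 0) (at x) \<longleftrightarrow> ((\<lambda>y. (F y - F x) / (y - x)) \<longlongrightarrow> 0) (at x)"
    by (simp add: has_field_derivative_iff)
  also have "\<dots> \<longleftrightarrow> (\<forall>e>0. \<forall>\<^sub>F y in at x. \<bar>F y - F x\<bar> \<le> e * \<bar>y - x\<bar>)"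
  proof safe
    fix e :: real assume lim: "((\<lambda>y. (F y - F x) / (y - x)) \<longlongrightarrow> 0) (at x)" and e: "0 < e"
    have "\<forall>\<^sub>F y in at x. y \<noteq> x" by (simp add: eventually_at_filter)
    with tendstoD[OF lim e] show "\<forall>\<^sub>F y in at x. \<bar>F y - F x\<bar> \<le> e * \<bar>y - x\<bar>"
    proof eventually_elim
      case (elim y)
      then show ?case using quotient[of y e] by (simp add: dist_real_def)
    qed
  next
    assume bound: "\<forall>e>0. \<forall>\<^sub>F y in at x. \<bar>F y - F x\<bar> \<le> e * \<bar>y - x\<bar>"
    show "((\<lambda>y. (F y - F x) / (y - x)) \<longlongrightarrow> 0) (at x)"
    proof (rule tendstoI)
      fix e :: real assume "0 < e"
      then have "\<forall>\<^sub>F y in at x. \<bar>F y - F x\<bar> \<le> e / 2 * \<bar>y - x\<bar>"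
        using bound half_gt_zero by blast
      moreover have "\<forall>\<^sub>F y in at x. y \<noteq> x" by (simp add: eventually_at_filter)
      ultimately show "\<forall>\<^sub>F y in at x. dist ((F y - F x) / (y - x)) 0 < e"
      proof eventually_elim
        case (elim y)
        then have "\<bar>(F y - F x) / (y - x)\<bar> \<le> e / 2" using quotient[of y "e / 2"] by blast
        then show ?case using \<open>0 < e\<close> by (simp only: dist_real_def diff_zero)
      qed
    qed
  qed
  finally show ?thesis .
qed

lemma deriv_zero_local_radius:
  assumes der: "\<And>x. x \<in> A \<Longrightarrow> (\<phi> has_real_derivative 0) (at x)" and e: "0 < e"
  obtains d where "\<And>x. 0 < d x"
    "\<And>x y. x \<in> A \<Longrightarrow> \<bar>y - x\<bar> < d x \<Longrightarrow> \<bar>\<phi> y - \<phi> x\<bar> \<le> e * \<bar>y - x\<bar>"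
proof -
  have "\<exists>d>0. x \<in> A \<longrightarrow> (\<forall>y. \<bar>y - x\<bar> < d \<longrightarrow> \<bar>\<phi> y - \<phi> x\<bar> \<le> e * \<bar>y - x\<bar>)" for x
  proof (cases "x \<in> A")
    case True
    then have "\<forall>\<^sub>F y in at x. \<bar>\<phi> y - \<phi> x\<bar> \<le> e * \<bar>y - x\<bar>"
      using der e has_real_derivative_zero_iff_eventually_le by blast
    then obtain d where "0 < d" "\<And>y. y \<noteq> x \<Longrightarrow> dist y x < d \<Longrightarrow> \<bar>\<phi> y - \<phi> x\<bar> \<le> e * \<bar>y - x\<bar>"
      unfolding eventually_at by blast
    then show ?thesis by (metis diff_self abs_zero mult_zero_right order_refl dist_real_def)
  qed (auto intro: exI[of _ 1])
  then show ?thesis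
    using that choice[of "\<lambda>x d. 0 < d \<and> (x \<in> A \<longrightarrow> (\<forall>y. \<bar>y - x\<bar> < d \<longrightarrow> \<bar>\<phi> y - \<phi> x\<bar> \<le> e * \<bar>y - x\<bar>))"]
    by blast
qed

lemma tagged_division_increment_le:
  fixes \<phi> :: "real \<Rightarrow> real"
  assumes pq: "p \<le> q" and D: "D tagged_division_of {p..q}"
    and tag: "\<And>x K. (x, K) \<in> D \<Longrightarrow>
      \<bar>\<phi> (Sup K) - \<phi> (Inf K)\<bar> \<le> e * Henstock_Kurzweil_Integration.content K + L * (Henstock_Kurzweil_Integration.content K * w x)"
  shows "\<bar>\<phi> q - \<phi> p\<bar> \<le> e * (q - p) + L * (\<Sum>(x,K)\<in>D. Henstock_Kurzweil_Integration.content K * w x)"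
proof -
  have content_sum: "(\<Sum>(x,K)\<in>D. Henstock_Kurzweil_Integration.content K) = q - p"
    using additive_content_tagged_division[of D p q] D pq by simp
  have "\<bar>\<phi> q - \<phi> p\<bar> = \<bar>\<Sum>(x,K)\<in>D. \<phi> (Sup K) - \<phi> (Inf K)\<bar>"
    by (simp add: additive_tagged_division_1[OF pq D])
  also have "\<dots> \<le> (\<Sum>(x,K)\<in>D. \<bar>\<phi> (Sup K) - \<phi> (Inf K)\<bar>)"
    by (rule order_trans[OF sum_abs]) (simp add: case_prod_unfold)
  also have "\<dots> \<le> (\<Sum>(x,K)\<in>D. e * Henstock_Kurzweil_Integration.content K + L * (Henstock_Kurzweil_Integration.content K * w x))"
    using tag by (intro sum_mono) auto
  also have "\<dots> = e * (q - p) + L * (\<Sum>(x,K)\<in>D. Henstock_Kurzweil_Integration.content K * w x)"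
    using content_sum[unfolded case_prod_unfold]
    by (simp add: sum.distrib case_prod_unfold flip: sum_distrib_left)
  finally show ?thesis .
qed

lemma lipschitz_increment_le_tag:
  assumes lip: "L-lipschitz_on {p..q} \<phi>" and x: "u \<le> x" "x \<le> v" and uv: "{u..v} \<subseteq> {p..q}"
    and e: "0 \<le> e"
    and near: "x \<notin> M \<Longrightarrow> \<bar>\<phi> u - \<phi> x\<bar> \<le> e * \<bar>u - x\<bar> \<and> \<bar>\<phi> v - \<phi> x\<bar> \<le> e * \<bar>v - x\<bar>"
  shows "\<bar>\<phi> v - \<phi> u\<bar> \<le> e * (v - u) + L * ((v - u) * indicat_real M x)"
proof (cases "x \<in> M")
  case True
  have "u \<in> {p..q}" "v \<in> {p..q}" using uv x by auto
  then have "\<bar>\<phi> v - \<phi> u\<bar> \<le> L * (v - u)"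
    using lipschitz_onD[OF lip] x by (fastforce simp: dist_real_def)
  moreover have "0 \<le> e * (v - u)" using e x by simp
  ultimately show ?thesis using True by simp
next
  case False
  moreover have "\<bar>u - x\<bar> = x - u" "\<bar>v - x\<bar> = v - x" using x by simp_all
  ultimately have "\<bar>\<phi> u - \<phi> x\<bar> \<le> e * (x - u)" "\<bar>\<phi> v - \<phi> x\<bar> \<le> e * (v - x)"
    using near by simp_all
  then have "\<bar>\<phi> v - \<phi> u\<bar> \<le> e * (v - u)" by (simp add: algebra_simps)
  then show ?thesis using False by simp
qed

text \<open>Henstock's argument: tags off the exceptional set contribute \<open>e\<close> times the length of
  their interval, and tags in it carry, by the Lipschitz bound, at most \<open>L\<close> times the
  Riemann sum of its indicator, which is small because that indicator integrates to 0.\<close>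
lemma lipschitz_deriv_zero_ae_increment_le:
  assumes pq: "p \<le> q" and lip: "L-lipschitz_on {p..q} \<phi>" and N: "negligible N"
    and der: "\<And>x. x \<in> {p<..<q} - N \<Longrightarrow> (\<phi> has_real_derivative 0) (at x)"
    and e: "0 < e"
  shows "\<bar>\<phi> q - \<phi> p\<bar> \<le> e * (q - p + L)"
proof -
  let ?N = "insert p (insert q N)"
  have "negligible ?N" using N by simp
  then have "(indicat_real ?N has_integral 0) {p..q}"
    unfolding negligible_def by (metis box_real(2))
  from this[unfolded has_integral_real, rule_format, OF e] obtain \<gamma> where \<gamma>: "gauge \<gamma>"
    and \<gamma>_sum: "\<And>D. D tagged_division_of {p..q} \<Longrightarrow> \<gamma> fine D \<Longrightarrow>
      \<bar>\<Sum>(x,K)\<in>D. Henstock_Kurzweil_Integration.content K * indicat_real ?N x\<bar> < e"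
    by auto
  obtain d where d: "\<And>x. 0 < d x"
    "\<And>x y. x \<in> {p<..<q} - N \<Longrightarrow> \<bar>y - x\<bar> < d x \<Longrightarrow> \<bar>\<phi> y - \<phi> x\<bar> \<le> e * \<bar>y - x\<bar>"
    using deriv_zero_local_radius[OF der e] by blast
  have "gauge (\<lambda>x. \<gamma> x \<inter> ball x (d x))" using \<gamma> d(1) by (intro gauge_Int) (auto simp: gauge_def)
  then obtain D where D: "D tagged_division_of {p..q}" "(\<lambda>x. \<gamma> x \<inter> ball x (d x)) fine D"
    using fine_division_exists_real by blast
  have "\<bar>\<phi> (Sup K) - \<phi> (Inf K)\<bar> \<le> e * Henstock_Kurzweil_Integration.content K
      + L * (Henstock_Kurzweil_Integration.content K * indicat_real ?N x)"
    if xK: "(x, K) \<in> D" for x K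
  proof -
    obtain u v where "K = cbox u v" using tagged_division_ofD(4)[OF D(1) xK] by blast
    with tagged_division_ofD(2,3)[OF D(1) xK] have K: "K = {u..v}" "u \<le> x" "x \<le> v" "{u..v} \<subseteq> {p..q}"
      by auto
    have "\<bar>\<phi> u - \<phi> x\<bar> \<le> e * \<bar>u - x\<bar> \<and> \<bar>\<phi> v - \<phi> x\<bar> \<le> e * \<bar>v - x\<bar>" if "x \<notin> ?N"
    proof -
      have x: "x \<in> {p<..<q} - N" using that K by auto
      have "u \<in> ball x (d x)" "v \<in> ball x (d x)" using D(2) xK K by (auto simp: fine_def subset_iff)
      then show ?thesis using d(2)[OF x, of u] d(2)[OF x, of v] by (simp add: dist_real_def abs_minus_commute)
    qed
    from lipschitz_increment_le_tag[where M = ?N, OF lip K(2,3,4) less_imp_le[OF e] this]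
    show ?thesis using K(1,2,3) by simp
  qed
  then have "\<bar>\<phi> q - \<phi> p\<bar> \<le> e * (q - p) + L * (\<Sum>(x,K)\<in>D. Henstock_Kurzweil_Integration.content K * indicat_real ?N x)"
    by (rule tagged_division_increment_le[OF pq D(1)])
  also have "\<dots> \<le> e * (q - p) + L * e"
    using \<gamma>_sum[OF D(1)] D(2) lipschitz_on_nonneg[OF lip]
    by (intro add_left_mono mult_left_mono) (auto simp: fine_Int)
  finally show ?thesis by (simp add: algebra_simps)
qed

lemma lipschitz_deriv_zero_ae_const:
  assumes pq: "p \<le> q" and lip: "L-lipschitz_on {p..q} \<phi>" and N: "negligible N"
    and der: "\<And>x. x \<in> {p<..<q} - N \<Longrightarrow> (\<phi> has_real_derivative 0) (at x)"
  shows "\<phi> q = \<phi> p"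
proof -
  have "\<bar>\<phi> q - \<phi> p\<bar> \<le> 0 + e" if e: "0 < e" for e
  proof -
    have C: "0 < q - p + L + 1" using pq lipschitz_on_nonneg[OF lip] by linarith
    then have "\<bar>\<phi> q - \<phi> p\<bar> \<le> e / (q - p + L + 1) * (q - p + L)"
      using e by (intro lipschitz_deriv_zero_ae_increment_le[OF pq lip N der]) simp_all
    also have "\<dots> \<le> e" using C e by (simp add: field_simps)
    finally show ?thesis by simp
  qed
  then show ?thesis using field_le_epsilon[of "\<bar>\<phi> q - \<phi> p\<bar>" 0] by simp
qed

lemma F_S1_eq_if_midpoint_unit_deriv:
  assumes fg: "f \<in> F_S1" "g \<in> F_S1" and N: "negligible N"
    and unit: "\<And>x. x \<in> {0<..<pi} - N \<Longrightarrow>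
      \<exists>D. ((\<lambda>x. (f x + g x) / 2) has_real_derivative D) (at x) \<and> \<bar>D\<bar> = 1"
  shows "f = g"
proof -
  note f = F_S1D[OF fg(1)] and g = F_S1D[OF fg(2)]
  have der: "((\<lambda>x. f x - g x) has_real_derivative 0) (at x)" if x: "x \<in> {0<..<pi} - N" for x
  proof -
    obtain D where D: "((\<lambda>x. (f x + g x) / 2) has_real_derivative D) (at x)" "\<bar>D\<bar> = 1"
      using unit[OF x] by blast
    have "x \<in> interior {0..pi}" using x by simp
    then have "(f has_real_derivative D) (at x)" "(g has_real_derivative D) (at x)"
      using has_real_derivative_of_midpoint[OF f(1) g(1)] has_real_derivative_of_midpoint[OF g(1) f(1)] D
      by (simp_all add: add.commute)
    then show ?thesis using DERIV_diff by force
  qed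
  have lip: "2-lipschitz_on {0..pi} (\<lambda>x. f x - g x)"
    using lipschitz_on_diff[OF f(1) g(1)] by simp
  have const: "f x - g x = f 0 - g 0" if "x \<in> {0..pi}" for x
    using that der by (intro lipschitz_deriv_zero_ae_const[OF _ lipschitz_on_subset[OF lip] N]) auto
  have "f 0 - g 0 = 0" using const[of pi] f(4) g(4) by simp
  show "f = g"
  proof
    fix x show "f x = g x"
      using const[of x] \<open>f 0 - g 0 = 0\<close> f(2)[of x] g(2)[of x] by (cases "x \<in> {0..pi}") auto
  qed
qed

theorem extreme_if_ae_unit_deriv:
  assumes h: "h \<in> F_S1"
    and ae: "AE x in lebesgue. x \<in> {0..pi} \<longrightarrow> (\<exists>D. (h has_real_derivative D) (at x) \<and> \<bar>D\<bar> = 1)"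
  shows "extreme_pt F_S1 h"
proof -
  from ae obtain N where N: "N \<in> null_sets lebesgue" and
    "{x \<in> space lebesgue. \<not> (x \<in> {0..pi} \<longrightarrow> (\<exists>D. (h has_real_derivative D) (at x) \<and> \<bar>D\<bar> = 1))} \<subseteq> N"
    unfolding eventually_ae_filter by blast
  then have unit: "\<And>x. x \<in> {0..pi} - N \<Longrightarrow> \<exists>D. (h has_real_derivative D) (at x) \<and> \<bar>D\<bar> = 1"
    by auto
  have "f = g" if fg: "f \<in> F_S1" "g \<in> F_S1" "h = (\<lambda>x. (f x + g x) / 2)" for f g
  proof (rule F_S1_eq_if_midpoint_unit_deriv[OF fg(1,2) N[folded negligible_iff_null_sets]])
    fix x assume "x \<in> {0<..<pi} - N"
    then show "\<exists>D. ((\<lambda>x. (f x + g x) / 2) has_real_derivative D) (at x) \<and> \<bar>D\<bar> = 1"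
      using unit[of x] fg(3) by auto
  qed
  then show ?thesis unfolding extreme_pt_def using h by blast
qed

section \<open>Monotone functions with negligible image\<close>

lemma disjoint_balls_le:
  fixes x y r s :: real
  assumes "0 < r" "0 < s" "ball x r \<inter> ball y s = {}" "x \<le> y"
  shows "x + r \<le> y - s"
proof (rule ccontr)
  assume "\<not> ?thesis"
  then have "(max (x - r) (y - s) + min (x + r) (y + s)) / 2 \<in> ball x r \<inter> ball y s"
    using assms(1,2,4) by (auto simp: ball_eq_greaterThanLessThan max_def min_def)
  then show False using assms(3) by blast
qed

lemma expanding_point_good_radius:
  fixes F :: "real \<Rightarrow> real"
  assumes mono: "mono_on {p..q} F" and cont: "continuous_on {p..q} F"
    and x: "x \<in> {p<..<q}" and U: "open U" "F x \<in> U" and d: "0 < d"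
    and expand: "\<And>\<delta>. 0 < \<delta> \<Longrightarrow> \<exists>y\<in>{p..q}. y \<noteq> x \<and> \<bar>y - x\<bar> < \<delta> \<and> c * \<bar>y - x\<bar> \<le> \<bar>F y - F x\<bar>"
  shows "\<exists>r. 0 < r \<and> r < d \<and> p \<le> x - r \<and> x + r \<le> q \<and>
    c * r \<le> F (x + r) - F (x - r) \<and> {F (x - r)..F (x + r)} \<subseteq> U"
proof -
  obtain \<eta> where \<eta>: "0 < \<eta>" "ball (F x) \<eta> \<subseteq> U" using U open_contains_ball by blast
  have "continuous (at x within {p..q}) F" using cont x by (simp add: continuous_on_eq_continuous_within)
  then obtain \<delta>1 where \<delta>1: "0 < \<delta>1" "\<And>t. t \<in> {p..q} \<Longrightarrow> dist t x < \<delta>1 \<Longrightarrow> dist (F t) (F x) < \<eta>"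
    using \<eta>(1) unfolding continuous_within_eps_delta by blast
  define \<delta> where "\<delta> = min (min d \<delta>1) (min (x - p) (q - x))"
  have "0 < \<delta>" using d \<delta>1(1) x by (simp add: \<delta>_def)
  then obtain y where y: "y \<in> {p..q}" "y \<noteq> x" "\<bar>y - x\<bar> < \<delta>" "c * \<bar>y - x\<bar> \<le> \<bar>F y - F x\<bar>"
    using expand by blast
  define r where "r = \<bar>y - x\<bar>"
  have r: "0 < r" "r < d" "r < \<delta>1" "p \<le> x - r" "x + r \<le> q" using y by (auto simp: r_def \<delta>_def)
  have ends: "x - r \<in> {p..q}" "x + r \<in> {p..q}" using r x by auto
  have "F (x - r) \<le> F y" "F y \<le> F (x + r)" "F (x - r) \<le> F x" "F x \<le> F (x + r)"
    using mono_onD[OF mono] ends y(1) x r(1) by (auto simp: r_def)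
  then have "c * r \<le> F (x + r) - F (x - r)" using y(4) by (simp add: r_def)
  moreover have "dist (F (x - r)) (F x) < \<eta>" "dist (F (x + r)) (F x) < \<eta>"
    using \<delta>1(2)[OF ends(1)] \<delta>1(2)[OF ends(2)] r by (auto simp: dist_real_def)
  then have "{F (x - r)..F (x + r)} \<subseteq> U"
    using \<eta>(2) by (auto simp: dist_real_def subset_iff)
  ultimately show ?thesis using r by blast
qed

lemma disjoint_family_on_mono_images:
  fixes F :: "real \<Rightarrow> real"
  assumes mono: "mono_on {p..q} F" and disj: "disjoint_family_on (\<lambda>(x, r). ball x r) C"
    and inside: "\<And>x r. (x, r) \<in> C \<Longrightarrow> 0 < r \<and> p \<le> x - r \<and> x + r \<le> q"
  shows "disjoint_family_on (\<lambda>(x, r). {F (x - r)<..<F (x + r)}) C"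
  unfolding disjoint_family_on_def
proof (intro ballI impI)
  have sep: "{F (x - r)<..<F (x + r)} \<inter> {F (y - s)<..<F (y + s)} = {}"
    if "(x, r) \<in> C" "(y, s) \<in> C" "(x, r) \<noteq> (y, s)" "x \<le> y" for x r y s
  proof -
    have "ball x r \<inter> ball y s = {}"
      using disj[unfolded disjoint_family_on_def, rule_format, OF that(1-3)] by simp
    then have "x + r \<le> y - s" using disjoint_balls_le inside[OF that(1)] inside[OF that(2)] that(4) by blast
    then have "F (x + r) \<le> F (y - s)"
      using mono_onD[OF mono] inside[OF that(1)] inside[OF that(2)] by auto
    then show ?thesis by auto
  qed
  fix i j assume "i \<in> C" "j \<in> C" "i \<noteq> j"
  then show "(case i of (x, r) \<Rightarrow> {F (x - r)<..<F (x + r)}) \<inter> (case j of (x, r) \<Rightarrow> {F (x - r)<..<F (x + r)}) = {}"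
    using sep[of "fst i" "snd i" "fst j" "snd j"] sep[of "fst j" "snd j" "fst i" "snd i"]
    by (cases "fst i \<le> fst j") (auto simp: Int_commute split_beta)
qed

lemma emeasure_disjoint_expanding_balls_le:
  fixes F :: "real \<Rightarrow> real"
  assumes mono: "mono_on {p..q} F" and c: "0 < c" and C: "countable C"
    and disj: "disjoint_family_on (\<lambda>(x, r). ball x r) C"
    and good: "\<And>x r. (x, r) \<in> C \<Longrightarrow> 0 < r \<and> p \<le> x - r \<and> x + r \<le> q \<and>
        c * r \<le> F (x + r) - F (x - r) \<and> {F (x - r)..F (x + r)} \<subseteq> U"
    and U: "U \<in> sets lebesgue"
  shows "emeasure lebesgue (\<Union>(x, r)\<in>C. ball x r) \<le> ennreal (2 / c) * emeasure lebesgue U"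
proof -
  define J where "J = (\<lambda>(x, r). {F (x - r)<..<F (x + r)})"
  have disjJ: "disjoint_family_on J C"
    unfolding J_def using good by (intro disjoint_family_on_mono_images[OF mono disj]) blast
  have length: "emeasure lebesgue (ball x r) \<le> ennreal (2 / c) * emeasure lebesgue (J (x, r))"
    if "(x, r) \<in> C" for x r
  proof -
    have "2 * r \<le> (2 / c) * (F (x + r) - F (x - r))" using good[OF that] c by (simp add: field_simps)
    moreover have "0 < c * r" using good[OF that] c by simp
    then have "0 \<le> F (x + r) - F (x - r)" using good[OF that] by linarith
    ultimately show ?thesis
      using good[OF that] c by (simp add: J_def ball_eq_greaterThanLessThan ennreal_mult[symmetric])
  qed
  have UJ: "emeasure lebesgue (\<Union>i\<in>C. J i) = (\<integral>\<^sup>+i. emeasure lebesgue (J i) \<partial>count_space C)"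
    using C disjJ by (intro emeasure_UN_countable) (auto simp: J_def split: prod.splits)
  have "emeasure lebesgue (\<Union>(x, r)\<in>C. ball x r) = (\<integral>\<^sup>+i. emeasure lebesgue (case i of (x, r) \<Rightarrow> ball x r) \<partial>count_space C)"
    using C disj by (intro emeasure_UN_countable) auto
  also have "\<dots> \<le> (\<integral>\<^sup>+i. ennreal (2 / c) * emeasure lebesgue (J i) \<partial>count_space C)"
    using length by (intro nn_integral_mono) auto
  also have "\<dots> = ennreal (2 / c) * emeasure lebesgue (\<Union>i\<in>C. J i)"
    unfolding UJ by (rule nn_integral_cmult) simp
  also have "\<dots> \<le> ennreal (2 / c) * emeasure lebesgue U"
  proof (intro mult_left_mono emeasure_mono)
    show "(\<Union>i\<in>C. J i) \<subseteq> U"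
    proof (intro UN_least)
      fix i assume "i \<in> C"
      moreover obtain x r where i: "i = (x, r)" by fastforce
      ultimately have "{F (x - r)..F (x + r)} \<subseteq> U" using good by blast
      then show "J i \<subseteq> U" unfolding i J_def by auto
    qed
  qed (use U in auto)
  finally show ?thesis .
qed

lemma open_imp_sets_lebesgue: "open S \<Longrightarrow> S \<in> sets lebesgue"
  by (metis borel_open sets_completionI_sets sets_lborel)

lemma null_set_open_cover:
  assumes S: "S \<in> null_sets lebesgue" and e: "0 < e"
  obtains U where "open U" "S \<subseteq> U" "U \<in> sets lebesgue" "emeasure lebesgue U < ennreal e"
proof -
  obtain U where U: "open U" "S \<subseteq> U" "U - S \<in> lmeasurable" "emeasure lebesgue (U - S) < ennreal e"
    by (rule sets_lebesgue_outer_open[OF null_setsD2[OF S] e])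
  moreover have "U \<in> sets lebesgue" using U(1) by (rule open_imp_sets_lebesgue)
  moreover have "emeasure lebesgue U < ennreal e"
    using emeasure_Diff_null_set[OF S \<open>U \<in> sets lebesgue\<close>] U(4) by simp
  ultimately show ?thesis using that by blast
qed

lemma negligible_if_small_measurable_covers:
  assumes "\<And>e. 0 < e \<Longrightarrow> \<exists>B\<in>sets lebesgue. negligible (E - B) \<and> emeasure lebesgue B \<le> ennreal e"
  shows "negligible E"
  unfolding negligible_outer_le
proof (intro allI impI)
  fix e :: real assume "0 < e"
  then obtain B where B: "B \<in> sets lebesgue" "negligible (E - B)" "emeasure lebesgue B \<le> ennreal e"
    using assms by blast
  then have B_lmeas: "B \<in> lmeasurable"
    by (intro fmeasurableI) (auto simp: top_unique intro: le_less_trans)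
  have null: "E - B \<in> null_sets lebesgue" using B(2) by (simp add: negligible_iff_null_sets)
  show "\<exists>T. E \<subseteq> T \<and> T \<in> lmeasurable \<and> measure lebesgue T \<le> e"
  proof (intro exI conjI)
    show "E \<subseteq> (E - B) \<union> B" by blast
    show "(E - B) \<union> B \<in> lmeasurable" using null B_lmeas by (metis fmeasurableI_null_sets fmeasurable.Un)
    have "measure lebesgue ((E - B) \<union> B) = measure lebesgue B"
      using measure_Un_null_set[OF B(1) null] by (simp add: Un_commute)
    also have "\<dots> \<le> e" using B(3) emeasure_eq_measure2[OF B_lmeas] \<open>0 < e\<close> by simp
    finally show "measure lebesgue ((E - B) \<union> B) \<le> e" .
  qed
qed

text \<open>A Vitali-type argument: E is covered, up to a null set, by disjoint balls whose images
  under F lie in an open set of small measure and are at least \<open>c\<close> times as long.\<close>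
lemma expanding_set_negligible:
  fixes F :: "real \<Rightarrow> real"
  assumes mono: "mono_on {p..q} F" and cont: "continuous_on {p..q} F"
    and E: "E \<subseteq> {p<..<q}" and neg: "negligible (F ` E)" and c: "0 < c"
    and expand: "\<And>x \<delta>. x \<in> E \<Longrightarrow> 0 < \<delta> \<Longrightarrow> \<exists>y\<in>{p..q}. y \<noteq> x \<and> \<bar>y - x\<bar> < \<delta> \<and> c * \<bar>y - x\<bar> \<le> \<bar>F y - F x\<bar>"
  shows "negligible E"
proof (rule negligible_if_small_measurable_covers)
  fix e :: real assume e: "0 < e"
  have "F ` E \<in> null_sets lebesgue" "0 < e * c / 2" using neg e c by (simp_all add: negligible_iff_null_sets)
  then obtain U where U: "open U" "F ` E \<subseteq> U" "U \<in> sets lebesgue"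
    "emeasure lebesgue U < ennreal (e * c / 2)"
    by (rule null_set_open_cover)
  define K where "K = {(x, r). x \<in> E \<and> 0 < r \<and> p \<le> x - r \<and> x + r \<le> q \<and>
    c * r \<le> F (x + r) - F (x - r) \<and> {F (x - r)..F (x + r)} \<subseteq> U}"
  have "\<exists>i. i \<in> K \<and> x \<in> ball (fst i) (snd i) \<and> snd i < d" if x: "x \<in> E" and d: "0 < d" for x d
  proof -
    obtain r where "0 < r \<and> r < d \<and> p \<le> x - r \<and> x + r \<le> q \<and>
        c * r \<le> F (x + r) - F (x - r) \<and> {F (x - r)..F (x + r)} \<subseteq> U"
      using expanding_point_good_radius[OF mono cont _ U(1) _ d expand[OF x]] x E U(2) by blast
    then show ?thesis using x by (intro exI[of _ "(x, r)"]) (simp add: K_def)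
  qed
  then obtain C where C: "countable C" "C \<subseteq> K"
    and pw: "pairwise (\<lambda>i j. disjnt (ball (fst i) (snd i)) (ball (fst j) (snd j))) C"
    and negC: "negligible (E - (\<Union>i\<in>C. ball (fst i) (snd i)))"
    by (rule Vitali_covering_theorem_balls[of E K fst snd])
  define B where "B = (\<Union>(x, r)\<in>C. ball x r)"
  have B_alt: "(\<Union>i\<in>C. ball (fst i) (snd i)) = B" by (auto simp: B_def)
  have "disjoint_family_on (\<lambda>(x, r). ball x r) C"
    using pw unfolding disjoint_family_on_def pairwise_def disjnt_def by (auto simp: split_beta)
  then have "emeasure lebesgue B \<le> ennreal (2 / c) * emeasure lebesgue U"
    unfolding B_def using C(2) c
    by (intro emeasure_disjoint_expanding_balls_le[OF mono c C(1) _ _ U(3)]) (auto simp: K_def)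
  also have "\<dots> \<le> ennreal (2 / c) * ennreal (e * c / 2)"
    using U(4) by (intro mult_left_mono) auto
  also have "\<dots> = ennreal e" using c e by (simp flip: ennreal_mult)
  finally have "emeasure lebesgue B \<le> ennreal e" .
  moreover have "B \<in> sets lebesgue" unfolding B_def by (intro open_imp_sets_lebesgue) auto
  moreover have "negligible (E - B)" using negC by (simp add: B_alt)
  ultimately show "\<exists>B\<in>sets lebesgue. negligible (E - B) \<and> emeasure lebesgue B \<le> ennreal e" by blast
qed

text \<open>Points where F fails to have derivative 0 are, for some n, points of expansion at rate
  \<open>1/(n+1)\<close>; each such set is null by the previous lemma.\<close>
lemma mono_on_negligible_image_deriv_zero_ae:
  fixes F :: "real \<Rightarrow> real"
  assumes mono: "mono_on {p..q} F" and cont: "continuous_on {p..q} F"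
    and E: "E \<subseteq> {p<..<q}" and neg: "negligible (F ` E)"
  shows "AE x in lebesgue. x \<in> E \<longrightarrow> (F has_real_derivative 0) (at x)"
proof -
  define X where "X n = {x \<in> E. \<forall>\<delta>>0. \<exists>y\<in>{p..q}. y \<noteq> x \<and> \<bar>y - x\<bar> < \<delta> \<and>
    inverse (Suc n) * \<bar>y - x\<bar> \<le> \<bar>F y - F x\<bar>}" for n :: nat
  have "negligible (X n)" for n
    using E by (intro expanding_set_negligible[OF mono cont _ negligible_subset[OF neg]]) (auto simp: X_def)
  then have null: "(\<Union>n. X n) \<in> null_sets lebesgue"
    using negligible_Union_nat negligible_iff_null_sets by blast
  have "(F has_real_derivative 0) (at x)" if x: "x \<in> E" "x \<notin> (\<Union>n. X n)" for x
    unfolding has_real_derivative_zero_iff_eventually_le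
  proof (intro allI impI)
    fix e :: real assume "0 < e"
    then obtain n where n: "inverse (Suc n) < e" using reals_Archimedean by blast
    have "x \<notin> X n" using x(2) by blast
    then obtain \<delta> where \<delta>: "0 < \<delta>"
      "\<forall>y\<in>{p..q}. \<not> (y \<noteq> x \<and> \<bar>y - x\<bar> < \<delta> \<and> inverse (Suc n) * \<bar>y - x\<bar> \<le> \<bar>F y - F x\<bar>)"
      using x(1) unfolding X_def by blast
    show "\<forall>\<^sub>F y in at x. \<bar>F y - F x\<bar> \<le> e * \<bar>y - x\<bar>"
      unfolding eventually_at
    proof (intro exI[of _ "min \<delta> (min (x - p) (q - x))"] conjI ballI impI)
      show "0 < min \<delta> (min (x - p) (q - x))" using \<delta>(1) x E by auto
      fix y assume y: "y \<noteq> x \<and> dist y x < min \<delta> (min (x - p) (q - x))"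
      then have "y \<in> {p..q}" "\<bar>y - x\<bar> < \<delta>" by (auto simp: dist_real_def abs_less_iff)
      then have "\<bar>F y - F x\<bar> < inverse (Suc n) * \<bar>y - x\<bar>" using \<delta>(2) y by (auto simp: not_le)
      also have "\<dots> \<le> e * \<bar>y - x\<bar>" using n by (intro mult_right_mono) auto
      finally show "\<bar>F y - F x\<bar> \<le> e * \<bar>y - x\<bar>" by simp
    qed
  qed
  then show ?thesis by (intro AE_I'[OF null]) auto
qed

section \<open>Zero defect implies unit derivative almost everywhere\<close>

fun descents :: "(real \<Rightarrow> real) \<Rightarrow> real list \<Rightarrow> real set" where
  "descents h (x # y # zs) = (if h y \<le> h x then {x..y} else {}) \<union> descents h (y # zs)"
| "descents h _ = {}"

lemma descents_cover:
  "sorted xs \<Longrightarrow> xs \<noteq> [] \<Longrightarrow> t \<in> {hd xs<..last xs} \<Longrightarrow> t \<in> descents h xs \<union> descents (\<lambda>x. - h x) xs"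
proof (induction xs rule: induct_list012)
  case (3 x y zs)
  show ?case
  proof (cases "t \<le> y")
    case True
    then show ?thesis using "3.prems" by (cases "h y \<le> h x") auto
  next
    case False
    then show ?thesis using 3 by auto
  qed
qed auto

lemma lipschitz_on_add_id_mono:
  fixes h :: "real \<Rightarrow> real"
  assumes "1-lipschitz_on S h"
  shows "mono_on S (\<lambda>t. t + h t)"
proof (rule mono_onI)
  fix s t assume "s \<in> S" "t \<in> S" "s \<le> t"
  then have "\<bar>h t - h s\<bar> \<le> t - s" using lipschitz_onD[OF assms, of t s] by (simp add: dist_real_def)
  then show "s + h s \<le> t + h t" by (simp add: abs_le_iff)
qed

lemma descents_image_small:
  assumes lip: "1-lipschitz_on {p..q} h"
  shows "sorted xs \<Longrightarrow> set xs \<subseteq> {p..q} \<Longrightarrow> \<exists>T. (\<lambda>t. t + h t) ` descents h xs \<subseteq> T \<and>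
    T \<in> lmeasurable \<and> measure lebesgue T \<le> chain_slack h xs"
proof (induction xs rule: induct_list012)
  case (3 x y zs)
  obtain T where T: "(\<lambda>t. t + h t) ` descents h (y # zs) \<subseteq> T" "T \<in> lmeasurable"
    "measure lebesgue T \<le> chain_slack h (y # zs)"
    using "3.IH" "3.prems" by (auto simp: sorted_wrt_append)
  define I where "I = (if h y \<le> h x then {x + h x..y + h y} else {})"
  have xy: "x \<in> {p..q}" "y \<in> {p..q}" "x \<le> y" using "3.prems" by auto
  have mono: "mono_on {p..q} (\<lambda>t. t + h t)" by (rule lipschitz_on_add_id_mono[OF lip])
  have "(\<lambda>t. t + h t) ` {x..y} \<subseteq> {x + h x..y + h y}"
  proof (rule image_subsetI)
    fix t assume t: "t \<in> {x..y}"
    then have "t \<in> {p..q}" using xy by auto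
    then show "t + h t \<in> {x + h x..y + h y}"
      using mono_onD[OF mono xy(1) \<open>t \<in> {p..q}\<close>] mono_onD[OF mono \<open>t \<in> {p..q}\<close> xy(2)] t by simp
  qed
  then have "(\<lambda>t. t + h t) ` descents h (x # y # zs) \<subseteq> I \<union> T"
    using T(1) by (auto simp: I_def)
  moreover have I_lmeas: "I \<in> lmeasurable" by (simp add: I_def)
  moreover have "measure lebesgue I \<le> slack h x y"
  proof (cases "h y \<le> h x")
    case True
    then show ?thesis using mono_onD[OF mono xy] by (simp add: I_def slack_def)
  qed (use slack_nonneg[OF lip xy] in \<open>simp add: I_def\<close>)
  moreover have "measure lebesgue (I \<union> T) \<le> measure lebesgue I + measure lebesgue T"
    using I_lmeas T(2) by (intro measure_Un_le) auto
  ultimately show ?case using T(2,3) by (intro exI[of _ "I \<union> T"]) auto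
qed (auto intro!: exI[of _ "{}"])

lemma descents_limsup_deriv_ae:
  assumes lip: "1-lipschitz_on {p..q} h"
    and xs: "\<And>n. sorted (xs n)" "\<And>n. set (xs n) \<subseteq> {p..q}"
    and small: "\<And>n. chain_slack h (xs n) \<le> (1 / 2) ^ n"
  shows "AE x in lebesgue. x \<in> limsup (\<lambda>n. descents h (xs n)) \<inter> {p<..<q} \<longrightarrow>
    (h has_real_derivative -1) (at x)"
proof -
  let ?a = "\<lambda>t. t + h t" and ?Z = "limsup (\<lambda>n. descents h (xs n))"
  obtain T where T: "\<And>n. ?a ` descents h (xs n) \<subseteq> T n" "\<And>n. T n \<in> lmeasurable"
    "\<And>n. measure lebesgue (T n) \<le> (1 / 2) ^ n"
    using descents_image_small[OF lip xs] small by (metis order_trans)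
  have "limsup T \<in> null_sets lebesgue"
  proof (rule borel_cantelli_limsup1)
    show "T n \<in> sets lebesgue" "emeasure lebesgue (T n) < \<infinity>" for n
      using T(2)[of n] unfolding fmeasurable_def by blast+
    show "summable (\<lambda>n. measure lebesgue (T n))"
      using T(3) by (intro summable_comparison_test'[OF summable_geometric[of "1 / 2"]]) auto
  qed
  moreover have "?a ` (?Z \<inter> {p<..<q}) \<subseteq> limsup T"
  proof -
    have "\<And>n t. t \<in> descents h (xs n) \<Longrightarrow> ?a t \<in> T n" using T(1) by blast
    then show ?thesis by (auto simp: mem_limsup_iff elim!: frequently_elim1)
  qed
  ultimately have "negligible (?a ` (?Z \<inter> {p<..<q}))"
    using negligible_iff_null_sets negligible_subset by blast
  moreover have "continuous_on {p..q} ?a"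
    using lipschitz_on_continuous_on[OF lip] by (intro continuous_intros)
  ultimately have "AE x in lebesgue. x \<in> ?Z \<inter> {p<..<q} \<longrightarrow> (?a has_real_derivative 0) (at x)"
    by (intro mono_on_negligible_image_deriv_zero_ae[OF lipschitz_on_add_id_mono[OF lip]]) auto
  then show ?thesis
  proof (rule AE_mp, intro AE_I2 impI)
    fix x assume "x \<in> ?Z \<inter> {p<..<q} \<longrightarrow> (?a has_real_derivative 0) (at x)" "x \<in> ?Z \<inter> {p<..<q}"
    then have "((\<lambda>t. (t + h t) - t) has_real_derivative 0 - 1) (at x)"
      by (intro DERIV_diff DERIV_ident) auto
    then show "(h has_real_derivative -1) (at x)" by simp
  qed
qed

lemma defect_zero_imp_small_subdivisions:
  assumes lip: "1-lipschitz_on {0..b} h" and b: "0 \<le> b" and defect: "defect h b = 0"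
  shows "\<exists>xs. \<forall>n. xs n \<in> subdivisions b \<and> chain_slack h (xs n) < (1 / 2) ^ n"
proof -
  have "\<exists>xs. xs \<in> subdivisions b \<and> chain_slack h xs < (1 / 2) ^ n" for n :: nat
  proof -
    have "Inf (chain_slack h ` subdivisions b) < (1 / 2) ^ n" using defect by (simp add: defect_def)
    then show ?thesis using subdivisions_nonempty[OF b]
      by (subst (asm) cInf_less_iff) (auto intro: bdd_below_chain_slack[OF lip])
  qed
  then show ?thesis by metis
qed

theorem ae_unit_deriv_if_defect_zero:
  assumes lip: "1-lipschitz_on {0..b} h" and b: "0 \<le> b" and defect: "defect h b = 0"
  shows "AE x in lebesgue. x \<in> {0..b} \<longrightarrow> (\<exists>D. (h has_real_derivative D) (at x) \<and> \<bar>D\<bar> = 1)"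
proof -
  obtain xs where xs: "\<And>n. xs n \<in> subdivisions b" "\<And>n. chain_slack h (xs n) < (1 / 2) ^ n"
    using defect_zero_imp_small_subdivisions[OF lip b defect] by metis
  have sub: "sorted (xs n)" "set (xs n) \<subseteq> {0..b}" for n
    using xs(1)[of n] subdivisions_subset[OF xs(1)] by (auto simp: subdivisions_def)
  define A where "A = limsup (\<lambda>n. descents h (xs n))"
  define B where "B = limsup (\<lambda>n. descents (\<lambda>x. - h x) (xs n))"
  have cover: "x \<in> A \<or> x \<in> B" if "x \<in> {0<..<b}" for x
  proof -
    have "\<forall>n. x \<in> descents h (xs n) \<or> x \<in> descents (\<lambda>x. - h x) (xs n)"
      using descents_cover[OF sub(1)] xs(1) that by (simp add: subdivisions_def)
    then have "\<exists>\<^sub>F n in sequentially. x \<in> descents h (xs n) \<or> x \<in> descents (\<lambda>x. - h x) (xs n)"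
      by (auto intro: eventually_frequently)
    then show ?thesis by (simp add: A_def B_def mem_limsup_iff frequently_disj_iff)
  qed
  have "AE x in lebesgue. x \<in> A \<inter> {0<..<b} \<longrightarrow> (h has_real_derivative -1) (at x)"
    unfolding A_def using xs(2) by (intro descents_limsup_deriv_ae[OF lip sub]) (simp add: less_imp_le)
  moreover have "AE x in lebesgue. x \<in> B \<inter> {0<..<b} \<longrightarrow> ((\<lambda>x. - h x) has_real_derivative -1) (at x)"
    unfolding B_def using xs(2) lipschitz_on_minus[OF lip]
    by (intro descents_limsup_deriv_ae[OF _ sub]) (simp_all add: less_imp_le)
  moreover have "AE x in lebesgue. x \<notin> {0, b}"
    by (intro AE_I'[of "{0, b}"]) (auto simp: negligible_iff_null_sets[symmetric])
  ultimately show ?thesis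
  proof eventually_elim
    case (elim x)
    show ?case
    proof
      assume "x \<in> {0..b}"
      then have "x \<in> {0<..<b}" using elim(3) by auto
      then show "\<exists>D. (h has_real_derivative D) (at x) \<and> \<bar>D\<bar> = 1"
        using cover elim(1,2) DERIV_minus[of "\<lambda>x. - h x" "-1" x] by fastforce
    qed
  qed
qed

theorem proposition3p18:
  assumes "h \<in> F_S1"
  shows "extreme_pt F_S1 h \<longleftrightarrow>
    (AE x in lebesgue. x \<in> {0..pi} \<longrightarrow>
       (\<exists>D. (h has_real_derivative D) (at x) \<and> \<bar>D\<bar> = 1))"
proof
  note lip = F_S1D(1)[OF assms]
  assume "extreme_pt F_S1 h"
  then have "defect h pi = 0"
    using not_extreme_if_defect_pos[OF assms] defect_nonneg[OF lip pi_ge_zero] by linarith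
  then show "AE x in lebesgue. x \<in> {0..pi} \<longrightarrow> (\<exists>D. (h has_real_derivative D) (at x) \<and> \<bar>D\<bar> = 1)"
    by (rule ae_unit_deriv_if_defect_zero[OF lip pi_ge_zero])
next
  assume "AE x in lebesgue. x \<in> {0..pi} \<longrightarrow> (\<exists>D. (h has_real_derivative D) (at x) \<and> \<bar>D\<bar> = 1)"
  then show "extreme_pt F_S1 h" by (rule extreme_if_ae_unit_deriv[OF assms])
qed

end
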